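(* It is undecidable whether, for an arbitrary ranked alphabet $\Sigma$, computable strong bimonoid $B$, and bottom-up deterministic $(\Sigma,B)$-wta $\mathcal{A}$, there is a crisp-deterministic $(\Sigma,B)$-wta $\mathcal{B}$ such that $[\![\mathcal{B}]\!]^{\mathrm{init}}=[\![\mathcal{A}]\!]^{\mathrm{init}}$.
   Context: Ranked alphabet $\Sigma$ ($\Sigma^{(0)}\ne\emptyset$), trees $T_\Sigma$. A strong bimonoid $(B,\oplus,\otimes,\mathbb{0},\mathbb{1})$: commutative monoid $(B,\oplus,\mathbb{0})$, monoid $(B,\otimes,\mathbb{1})$, $\mathbb{0}\ne\mathbb{1}$, $\mathbb{0}$ multiplicatively absorbing, no distributivity; it is computable if $B$ is a recursive set and $\oplus,\otimes$ are computable. $(\Sigma,B)$-wta $\mathcal{A}=(Q,\delta,F)$: $Q$ finite nonempty, $\delta_k:Q^k\times\Sigma^{(k)}\times Q\to B$, $F:Q\to B$. $h_{\mathrm{V}(\mathcal{A})}:T_\Sigma\to B^Q$: $h_{\mathrm{V}(\mathcal{A})}(\sigma(\xi_1,\dots,\xi_k))_q=\bigoplus_{q_1,\dots,q_k}\big(\bigotimes_{i=1}^k h_{\mathrm{V}(\mathcal{A})}(\xi_i)_{q_i}\big)\otimes\delta_k(q_1\dots q_k,\sigma,q)$; $[\![\mathcal{A}]\!]^{\mathrm{init}}(\xi)=\bigoplus_q h_{\mathrm{V}(\mathcal{A})}(\xi)_q\otimes F_q$. Bottom-up deterministic: for all $k,\sigma,q_1,\dots,q_k$ at most one $q$ with $\delta_k(q_1\dots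 q_k,\sigma,q)\ne\mathbb{0}$. Crisp-deterministic: exactly one $q$ with $\delta_k(q_1\dots q_k,\sigma,q)=\mathbb{1}$ and all others $\mathbb{0}$. *)

theory Defs
  imports Main "HOL-Library.Nat_Bijection"
begin

datatype recf =
    Z
  | S
  | Id nat
  | Cn recf "recf list"
  | Pr recf recf
  | Mn recf

inductive eval :: "recf \<Rightarrow> nat list \<Rightarrow> nat \<Rightarrow> bool" where
  eval_Z: "eval Z xs 0"
| eval_S: "eval S (x # xs) (Suc x)"
| eval_Id: "i < length xs \<Longrightarrow> eval (Id i) xs (xs ! i)"
| eval_Cn: "list_all2 (\<lambda>g y. eval g xs y) gs ys \<Longrightarrow> eval f ys r \<Longrightarrow> eval (Cn f gs) xs r"
| eval_Pr0: "eval f xs r \<Longrightarrow> eval (Pr f g) (0 # xs) r"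
| eval_PrS: "eval (Pr f g) (n # xs) r \<Longrightarrow> eval g (n # r # xs) r' \<Longrightarrow> eval (Pr f g) (Suc n # xs) r'"
| eval_Mn: "eval f (r # xs) 0 \<Longrightarrow> (\<forall>i<r. \<exists>y. eval f (i # xs) y \<and> y > 0) \<Longrightarrow> eval (Mn f) xs r"

text \<open>Value of a program on an input (meaningful only where the program halts).\<close>
definition run :: "recf \<Rightarrow> nat list \<Rightarrow> nat" where
  "run f xs = (THE r. eval f xs r)"

fun recf_enc :: "recf \<Rightarrow> nat" where
  "recf_enc Z = prod_encode (0, 0)"
| "recf_enc S = prod_encode (1, 0)"
| "recf_enc (Id i) = prod_encode (2, i)"
| "recf_enc (Cn f gs) = prod_encode (3, prod_encode (recf_enc f, list_encode (map recf_enc gs)))"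
| "recf_enc (Pr f g) = prod_encode (4, prod_encode (recf_enc f, recf_enc g))"
| "recf_enc (Mn f) = prod_encode (5, recf_enc f)"

definition strong_bimonoid ::
  "nat set \<Rightarrow> (nat \<Rightarrow> nat \<Rightarrow> nat) \<Rightarrow> (nat \<Rightarrow> nat \<Rightarrow> nat) \<Rightarrow> nat \<Rightarrow> nat \<Rightarrow> bool" where
  "strong_bimonoid B pl tm z u \<longleftrightarrow>
     z \<in> B \<and> u \<in> B \<and> z \<noteq> u \<and>
     (\<forall>a\<in>B. \<forall>b\<in>B. pl a b \<in> B \<and> tm a b \<in> B) \<and>
     (\<forall>a\<in>B. \<forall>b\<in>B. \<forall>c\<in>B. pl (pl a b) c = pl a (pl b c)) \<and>
     (\<forall>a\<in>B. \<forall>b\<in>B. pl a b = pl b a) \<and>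
     (\<forall>a\<in>B. pl z a = a) \<and>
     (\<forall>a\<in>B. \<forall>b\<in>B. \<forall>c\<in>B. tm (tm a b) c = tm a (tm b c)) \<and>
     (\<forall>a\<in>B. tm u a = a \<and> tm a u = a) \<and>
     (\<forall>a\<in>B. tm z a = z \<and> tm a z = z)"

text \<open>A ranked alphabet is a finite set of symbols; a symbol is a pair (name, rank).\<close>
datatype tree = Node "nat \<times> nat" "tree list"

fun wf_tree :: "(nat \<times> nat) set \<Rightarrow> tree \<Rightarrow> bool" where
  "wf_tree Sig (Node s ts) \<longleftrightarrow> s \<in> Sig \<and> snd s = length ts \<and> (\<forall>t\<in>set ts. wf_tree Sig t)"

definition bsum :: "(nat \<Rightarrow> nat \<Rightarrow> nat) \<Rightarrow> nat \<Rightarrow> nat list \<Rightarrow> nat" where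
  "bsum pl z xs = foldr pl xs z"

definition bprod :: "(nat \<Rightarrow> nat \<Rightarrow> nat) \<Rightarrow> nat \<Rightarrow> nat list \<Rightarrow> nat" where
  "bprod tm u xs = foldl tm u xs"

fun hV :: "(nat \<Rightarrow> nat \<Rightarrow> nat) \<Rightarrow> (nat \<Rightarrow> nat \<Rightarrow> nat) \<Rightarrow> nat \<Rightarrow> nat \<Rightarrow> nat
           \<Rightarrow> (nat list \<Rightarrow> nat \<times> nat \<Rightarrow> nat \<Rightarrow> nat) \<Rightarrow> tree \<Rightarrow> nat \<Rightarrow> nat" where
  "hV pl tm z u n \<delta> (Node s ts) =
     (let hs = map (hV pl tm z u n \<delta>) ts in
      (\<lambda>q. bsum pl z
             (map (\<lambda>qs. tm (bprod tm u (map2 (\<lambda>h qi. h qi) hs qs)) (\<delta> qs s q))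
                  (List.n_lists (length ts) [0..<n]))))"

definition wta_sem :: "(nat \<Rightarrow> nat \<Rightarrow> nat) \<Rightarrow> (nat \<Rightarrow> nat \<Rightarrow> nat) \<Rightarrow> nat \<Rightarrow> nat \<Rightarrow> nat
           \<Rightarrow> (nat list \<Rightarrow> nat \<times> nat \<Rightarrow> nat \<Rightarrow> nat) \<Rightarrow> (nat \<Rightarrow> nat) \<Rightarrow> tree \<Rightarrow> nat" where
  "wta_sem pl tm z u n \<delta> F \<xi> = bsum pl z (map (\<lambda>q. tm (hV pl tm z u n \<delta> \<xi> q) (F q)) [0..<n])"

definition bu_deterministic :: "(nat \<times> nat) set \<Rightarrow> nat \<Rightarrow> nat \<Rightarrow> (nat list \<Rightarrow> nat \<times> nat \<Rightarrow> nat \<Rightarrow> nat) \<Rightarrow> bool" where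
  "bu_deterministic Sig z n \<delta> \<longleftrightarrow>
     (\<forall>s\<in>Sig. \<forall>qs. length qs = snd s \<longrightarrow> set qs \<subseteq> {..<n} \<longrightarrow>
        (\<forall>q\<in>{..<n}. \<forall>q'\<in>{..<n}. \<delta> qs s q \<noteq> z \<longrightarrow> \<delta> qs s q' \<noteq> z \<longrightarrow> q = q'))"

definition crisp_deterministic :: "(nat \<times> nat) set \<Rightarrow> nat \<Rightarrow> nat \<Rightarrow> nat \<Rightarrow> (nat list \<Rightarrow> nat \<times> nat \<Rightarrow> nat \<Rightarrow> nat) \<Rightarrow> bool" where
  "crisp_deterministic Sig z u n \<delta> \<longleftrightarrow>
     (\<forall>s\<in>Sig. \<forall>qs. length qs = snd s \<longrightarrow> set qs \<subseteq> {..<n} \<longrightarrow>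
        (\<exists>!q. q < n \<and> \<delta> qs s q = u) \<and> (\<forall>q<n. \<delta> qs s q = u \<or> \<delta> qs s q = z))"

record inst =
  sig    :: "(nat \<times> nat) list"   \<comment> \<open>ranked alphabet: list of (name, rank)\<close>
  memB   :: recf                   \<comment> \<open>characteristic function of B \<subseteq> nat\<close>
  plusB  :: recf
  timesB :: recf
  zeroB  :: nat
  oneB   :: nat
  nQ     :: nat                    \<comment> \<open>states are 0..<nQ\<close>
  delta  :: "((nat list \<times> (nat \<times> nat) \<times> nat) \<times> nat) list"  \<comment> \<open>transition table; missing entries have weight zero\<close>
  fin    :: "nat list"

definition Sig_of :: "inst \<Rightarrow> (nat \<times> nat) set" where "Sig_of I = set (sig I)"
definition B_of :: "inst \<Rightarrow> nat set" where "B_of I = {x. eval (memB I) [x] 1}"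
definition plus_of :: "inst \<Rightarrow> nat \<Rightarrow> nat \<Rightarrow> nat" where "plus_of I a b = run (plusB I) [a, b]"
definition times_of :: "inst \<Rightarrow> nat \<Rightarrow> nat \<Rightarrow> nat" where "times_of I a b = run (timesB I) [a, b]"
definition delta_of :: "inst \<Rightarrow> nat list \<Rightarrow> nat \<times> nat \<Rightarrow> nat \<Rightarrow> nat" where
  "delta_of I qs s q = (case map_of (delta I) (qs, s, q) of Some w \<Rightarrow> w | None \<Rightarrow> zeroB I)"
definition fin_of :: "inst \<Rightarrow> nat \<Rightarrow> nat" where "fin_of I q = fin I ! q"

definition sem_of :: "inst \<Rightarrow> tree \<Rightarrow> nat" where
  "sem_of I = wta_sem (plus_of I) (times_of I) (zeroB I) (oneB I) (nQ I) (delta_of I) (fin_of I)"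

definition valid_inst :: "inst \<Rightarrow> bool" where
  "valid_inst I \<longleftrightarrow>
     (\<exists>a. (a, 0) \<in> Sig_of I) \<and>
     (\<forall>x. eval (memB I) [x] 0 \<or> eval (memB I) [x] 1) \<and>
     (\<forall>a\<in>B_of I. \<forall>b\<in>B_of I. (\<exists>r. eval (plusB I) [a, b] r) \<and> (\<exists>r. eval (timesB I) [a, b] r)) \<and>
     strong_bimonoid (B_of I) (plus_of I) (times_of I) (zeroB I) (oneB I) \<and>
     nQ I \<ge> 1 \<and>
     (\<forall>e\<in>set (delta I). snd e \<in> B_of I) \<and>
     length (fin I) = nQ I \<and> set (fin I) \<subseteq> B_of I \<and>
     bu_deterministic (Sig_of I) (zeroB I) (nQ I) (delta_of I)"

definition has_crisp_equiv :: "inst \<Rightarrow> bool" where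
  "has_crisp_equiv I \<longleftrightarrow>
     (\<exists>n \<delta> F. n \<ge> 1 \<and> (\<forall>qs s q. \<delta> qs s q \<in> B_of I) \<and> (\<forall>q. F q \<in> B_of I) \<and>
        crisp_deterministic (Sig_of I) (zeroB I) (oneB I) n \<delta> \<and>
        (\<forall>\<xi>. wf_tree (Sig_of I) \<xi> \<longrightarrow>
           wta_sem (plus_of I) (times_of I) (zeroB I) (oneB I) n \<delta> F \<xi> = sem_of I \<xi>))"

definition inst_enc :: "inst \<Rightarrow> nat" where
  "inst_enc I = list_encode
     [ list_encode (map prod_encode (sig I)),
       recf_enc (memB I), recf_enc (plusB I), recf_enc (timesB I),
       zeroB I, oneB I, nQ I,
       list_encode (map (\<lambda>((qs, (a, k), q), w). list_encode [list_encode qs, a, k, q, w]) (delta I)),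
       list_encode (fin I) ]"

end

theory Submission
  imports Defs
begin

text \<open>Diagonalisation. For a program \<open>d\<close> we build an instance \<open>diag_inst d\<close> over the alphabet
  with \<open>\<alpha>\<close> of rank 0 and \<open>\<gamma>\<close> of rank 1 and over the strong bimonoid \<open>(\<nat>, +, \<otimes>, 0, 1)\<close>, where
  \<open>x \<otimes> y = 1 + min (x + y - 2) (T + 1)\<close> for \<open>x, y \<ge> 2\<close> and \<open>T\<close> is the least search bound under
  which \<open>d\<close> answers \<open>0\<close> on the code of \<open>diag_inst d\<close> itself (no cap if there is none).
  This \<open>\<otimes>\<close> is computable, since it only runs \<open>d\<close> with bounded searches, and its program can
  mention the code of the instance it belongs to by the trick behind Kleene's recursion theorem.
  The one-state automaton with weight \<open>1\<close> on \<open>\<alpha>\<close> and \<open>2\<close> on \<open>\<gamma>\<close> maps \<open>\<gamma>\<^sup>n(\<alpha>)\<close> to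
  \<open>1 + min n (T + 1)\<close>. A crisp-deterministic automaton takes only its finitely many final weights
  as values, so an equivalent one exists iff \<open>T\<close> exists, i.e. iff \<open>d\<close> answers \<open>0\<close>; either way
  \<open>d\<close> answers wrongly on \<open>diag_inst d\<close>.\<close>

lemma list_all2_unique:
  assumes "list_all2 P as bs" "list_all2 Q as cs" "\<And>a b c. P a b \<Longrightarrow> Q a c \<Longrightarrow> b = c"
  shows "bs = cs"
  using assms
proof (induction arbitrary: cs rule: list_all2_induct)
  case (Cons x xs y ys)
  then show ?case by (cases cs) auto
qed simp

lemma eval_deterministic: "eval f xs r \<Longrightarrow> eval f xs r' \<Longrightarrow> r = r'"
proof (induction arbitrary: r' rule: eval.induct)
  case (eval_Cn xs gs ys f r)
  from eval_Cn.prems obtain ys' where ys': "list_all2 (\<lambda>g y. eval g xs y) gs ys'" "eval f ys' r'"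
    by (cases rule: eval.cases) auto
  have "ys = ys'" by (rule list_all2_unique[OF eval_Cn.IH(1) ys'(1)]) auto
  then show ?case using ys' eval_Cn.IH(2) by auto
next
  case (eval_PrS f g n xs r r')
  from eval_PrS.prems obtain r2 where "eval (Pr f g) (n # xs) r2" "eval g (n # r2 # xs) r'"
    by (cases rule: eval.cases) auto
  then show ?case using eval_PrS.IH by blast
next
  case (eval_Mn f r xs)
  from eval_Mn.prems obtain r2 where r2: "r' = r2" "eval f (r2 # xs) 0" "\<forall>i<r2. \<exists>y. eval f (i # xs) y \<and> y > 0"
    by (cases rule: eval.cases) auto
  show ?case
  proof (rule linorder_cases[of r r2])
    assume "r < r2"
    then show ?thesis using r2 eval_Mn.IH(1) by fastforce
  next
    assume "r2 < r"
    then show ?thesis using r2 eval_Mn.IH(2) by fastforce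
  qed (use r2 in simp)
qed (erule eval.cases; auto)+

lemma run_eqI: "eval f xs r \<Longrightarrow> run f xs = r"
  unfolding run_def using eval_deterministic by blast

section \<open>A library of total programs\<close>

lemma eval_IdI: "i < length xs \<Longrightarrow> xs ! i = v \<Longrightarrow> eval (Id i) xs v"
  using eval_Id by blast

lemma eval_Cn1: "eval g xs a \<Longrightarrow> eval f [a] r \<Longrightarrow> eval (Cn f [g]) xs r"
  by (rule eval_Cn[of _ _ "[a]"]) auto

lemma eval_Cn2: "eval g xs a \<Longrightarrow> eval h xs b \<Longrightarrow> eval f [a, b] r \<Longrightarrow> eval (Cn f [g, h]) xs r"
  by (rule eval_Cn[of _ _ "[a, b]"]) auto

lemma eval_Cn3:
  "eval g xs a \<Longrightarrow> eval h xs b \<Longrightarrow> eval k xs c \<Longrightarrow> eval f [a, b, c] r \<Longrightarrow> eval (Cn f [g, h, k]) xs r"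
  by (rule eval_Cn[of _ _ "[a, b, c]"]) auto

lemma eval_Cn_S: "eval g xs a \<Longrightarrow> eval (Cn S [g]) xs (Suc a)"
  by (rule eval_Cn1) (auto intro: eval_S)

lemma eval_Pr_iterate:
  assumes "eval f xs (h 0)" and "\<And>i. eval g (i # h i # xs) (h (Suc i))"
  shows "eval (Pr f g) (n # xs) (h n)"
  by (induction n) (use assms in \<open>auto intro: eval_Pr0 eval_PrS\<close>)

primrec const_rf :: "nat \<Rightarrow> recf" where
  "const_rf 0 = Z"
| "const_rf (Suc n) = Cn S [const_rf n]"

lemma eval_const_rf: "eval (const_rf n) xs n"
  by (induction n) (auto intro: eval_Z eval_Cn_S)

definition add_prog :: recf where "add_prog = Pr (Id 0) (Cn S [Id 1])"

lemma eval_add_prog: "eval add_prog [a, b] (a + b)"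
  unfolding add_prog_def
  by (rule eval_Pr_iterate[where h = "\<lambda>i. i + b", simplified]) (auto intro!: eval_IdI eval_Cn_S)

definition add_rf :: "recf \<Rightarrow> recf \<Rightarrow> recf" where "add_rf g h = Cn add_prog [g, h]"

lemma eval_add_rf: "eval g xs a \<Longrightarrow> eval h xs b \<Longrightarrow> eval (add_rf g h) xs (a + b)"
  unfolding add_rf_def using eval_Cn2 eval_add_prog by blast

definition pred_rf :: "recf \<Rightarrow> recf" where "pred_rf g = Cn (Pr Z (Id 0)) [g]"

lemma eval_pred_rf: "eval g xs a \<Longrightarrow> eval (pred_rf g) xs (a - 1)"
proof -
  have "eval (Pr Z (Id 0)) [a] (a - 1)"
    by (rule eval_Pr_iterate[where h = "\<lambda>i. i - 1"]) (auto intro: eval_Z eval_IdI)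
  then show "eval g xs a \<Longrightarrow> eval (pred_rf g) xs (a - 1)"
    unfolding pred_rf_def by (rule eval_Cn1[rotated])
qed

definition ifpos_rf :: "recf \<Rightarrow> recf \<Rightarrow> recf \<Rightarrow> recf" where
  "ifpos_rf g h k = Cn (Pr (Id 1) (Id 2)) [g, h, k]"

lemma eval_ifpos_rf:
  "eval g xs a \<Longrightarrow> eval h xs b \<Longrightarrow> eval k xs c \<Longrightarrow> eval (ifpos_rf g h k) xs (if a = 0 then c else b)"
  unfolding ifpos_rf_def
  by (rule eval_Cn3, assumption+, rule eval_Pr_iterate[where h = "\<lambda>i. if i = 0 then c else b"])
    (auto intro: eval_IdI)

definition case01_rf :: "recf \<Rightarrow> recf \<Rightarrow> recf \<Rightarrow> recf \<Rightarrow> recf" where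
  "case01_rf g h0 h1 h2 = ifpos_rf g (ifpos_rf (pred_rf g) h2 h1) h0"

lemma eval_case01_rf:
  assumes "eval g xs a" "eval h0 xs b0" "eval h1 xs b1" "eval h2 xs b2"
  shows "eval (case01_rf g h0 h1 h2) xs (if a = 0 then b0 else if a = 1 then b1 else b2)"
proof -
  have "eval (case01_rf g h0 h1 h2) xs (if a = 0 then b0 else if a - 1 = 0 then b1 else b2)"
    unfolding case01_rf_def by (intro eval_ifpos_rf eval_pred_rf assms)
  then show ?thesis by (cases a) auto
qed

definition triangle_prog :: recf where "triangle_prog = Pr Z (add_rf (Id 1) (Cn S [Id 0]))"

lemma eval_triangle_prog: "eval triangle_prog [n] (triangle n)"
  unfolding triangle_prog_def
proof (rule eval_Pr_iterate[where h = triangle])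
  fix i
  have "eval (add_rf (Id 1) (Cn S [Id 0])) [i, triangle i] (triangle i + Suc i)"
    by (intro eval_add_rf eval_Cn_S eval_IdI) auto
  then show "eval (add_rf (Id 1) (Cn S [Id 0])) [i, triangle i] (triangle (Suc i))" by simp
qed (simp add: eval_Z)

definition pair_rf :: "recf \<Rightarrow> recf \<Rightarrow> recf" where
  "pair_rf g h = add_rf (Cn triangle_prog [add_rf g h]) g"

lemma eval_pair_rf: "eval g xs a \<Longrightarrow> eval h xs b \<Longrightarrow> eval (pair_rf g h) xs (prod_encode (a, b))"
  unfolding pair_rf_def prod_encode_def split
  by (intro eval_add_rf eval_Cn1[OF _ eval_triangle_prog])

primrec list_rf :: "recf list \<Rightarrow> recf" where
  "list_rf [] = Z"
| "list_rf (g # gs) = Cn S [pair_rf g (list_rf gs)]"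

lemma eval_list_rf: "list_all2 (\<lambda>g v. eval g xs v) gs vs \<Longrightarrow> eval (list_rf gs) xs (list_encode vs)"
  by (induction rule: list_all2_induct) (auto intro: eval_Z eval_Cn_S eval_pair_rf)

definition const_code_prog :: recf where
  "const_code_prog = Pr Z (pair_rf (const_rf 3) (pair_rf (const_rf (recf_enc S)) (list_rf [Id 1])))"

lemma eval_const_code_prog: "eval const_code_prog [n] (recf_enc (const_rf n))"
  unfolding const_code_prog_def
proof (rule eval_Pr_iterate[where h = "\<lambda>n. recf_enc (const_rf n)"])
  fix i
  have "eval (list_rf [Id 1]) [i, recf_enc (const_rf i)] (list_encode [recf_enc (const_rf i)])"
    by (rule eval_list_rf) (auto intro: eval_IdI)
  then show "eval (pair_rf (const_rf 3) (pair_rf (const_rf (recf_enc S)) (list_rf [Id 1])))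
      [i, recf_enc (const_rf i)] (recf_enc (const_rf (Suc i)))"
    by (auto intro!: eval_pair_rf eval_const_rf simp del: list_rf.simps list_encode.simps)
qed (simp add: eval_Z prod_encode_def)

section \<open>Evaluation with bounded minimisation\<close>

text \<open>\<open>bounded_eval f m xs\<close> runs \<open>f\<close> with every unbounded search cut off after
  \<open>m\<close> candidates; the result \<open>0\<close> means "no value", \<open>Suc r\<close> means value
  \<open>r\<close>. In \<open>bounded_mn\<close>, \<open>1\<close> means "still searching".\<close>

primrec bounded_pr :: "(nat list \<Rightarrow> nat) \<Rightarrow> (nat list \<Rightarrow> nat) \<Rightarrow> nat \<Rightarrow> nat list \<Rightarrow> nat" where
  "bounded_pr F G 0 ys = F ys"
| "bounded_pr F G (Suc i) ys = (let r = bounded_pr F G i ys in if r = 0 then 0 else G (i # (r - 1) # ys))"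

primrec bounded_mn :: "(nat list \<Rightarrow> nat) \<Rightarrow> nat \<Rightarrow> nat list \<Rightarrow> nat" where
  "bounded_mn F 0 xs = 1"
| "bounded_mn F (Suc i) xs = (let t = bounded_mn F i xs in
     if t = 1 then (let v = F (i # xs) in if v = 0 then 0 else if v = 1 then Suc (Suc i) else 1) else t)"

primrec bounded_eval :: "recf \<Rightarrow> nat \<Rightarrow> nat list \<Rightarrow> nat" where
  "bounded_eval Z m xs = 1"
| "bounded_eval S m xs = (case xs of [] \<Rightarrow> 0 | x # _ \<Rightarrow> Suc (Suc x))"
| "bounded_eval (Id i) m xs = (if i < length xs then Suc (xs ! i) else 0)"
| "bounded_eval (Cn f gs) m xs = (let ys = map (\<lambda>g. bounded_eval g m xs) gs in
      if 0 \<in> set ys then 0 else bounded_eval f m (map (\<lambda>y. y - 1) ys))"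
| "bounded_eval (Pr f g) m xs =
      (case xs of [] \<Rightarrow> 0 | n # ys \<Rightarrow> bounded_pr (bounded_eval f m) (bounded_eval g m) n ys)"
| "bounded_eval (Mn f) m xs = bounded_mn (bounded_eval f m) m xs - 1"

lemma bounded_mn_invariant:
  "(bounded_mn F i xs = 1 \<longrightarrow> (\<forall>j<i. \<exists>y. F (j # xs) = Suc (Suc y))) \<and>
   (\<forall>r. bounded_mn F i xs = Suc (Suc r) \<longrightarrow>
      r < i \<and> F (r # xs) = 1 \<and> (\<forall>j<r. \<exists>y. F (j # xs) = Suc (Suc y)))"
proof (induction i)
  case (Suc i)
  show ?case
  proof (cases "bounded_mn F i xs = 1")
    case True
    then show ?thesis using Suc
      by (cases "F (i # xs)") (auto simp: Let_def less_Suc_eq not0_implies_Suc)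
  next
    case False
    then show ?thesis using Suc by (auto simp: Let_def less_Suc_eq)
  qed
qed simp

lemma bounded_mn_found:
  assumes "\<forall>i<r. \<exists>y. F (i # xs) = Suc (Suc y)" and "F (r # xs) = 1" and "r < j"
  shows "bounded_mn F j xs = Suc (Suc r)"
proof -
  have searching: "bounded_mn F j xs = 1" if "j \<le> r" for j
    using that
  proof (induction j)
    case (Suc j)
    then have "j < r" by simp
    then obtain y where "F (j # xs) = Suc (Suc y)" using assms(1) by blast
    with Suc show ?case by (simp add: Let_def)
  qed simp
  show ?thesis
    using assms(3)
  proof (induction j)
    case (Suc j)
    show ?case
    proof (cases "j = r")
      case True
      then show ?thesis using searching[of r] assms(2) by (simp add: Let_def)
    next
      case False
      then show ?thesis using Suc by (simp add: Let_def)
    qed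
  qed simp
qed

lemma eval_Pr_bounded_pr:
  assumes "\<And>ys r. F ys = Suc r \<Longrightarrow> eval f ys r" and "\<And>ys r. G ys = Suc r \<Longrightarrow> eval g ys r"
  shows "bounded_pr F G n ys = Suc r \<Longrightarrow> eval (Pr f g) (n # ys) r"
proof (induction n arbitrary: r)
  case 0
  then show ?case using assms(1) by (auto intro: eval_Pr0)
next
  case (Suc n)
  then obtain r0 where r0: "bounded_pr F G n ys = Suc r0"
    by (cases "bounded_pr F G n ys") (auto simp: Let_def)
  with Suc.prems have "G (n # r0 # ys) = Suc r" by (simp add: Let_def)
  then show ?case using Suc.IH[OF r0] assms(2) by (auto intro: eval_PrS)
qed

lemma bounded_eval_sound: "bounded_eval f m xs = Suc r \<Longrightarrow> eval f xs r"
proof (induction f arbitrary: xs r)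
  case Z then show ?case by (auto intro: eval_Z)
next
  case S then show ?case by (cases xs) (auto intro: eval_S)
next
  case (Id i) then show ?case by (auto intro!: eval_IdI split: if_splits)
next
  case (Cn f gs)
  let ?vs = "map (\<lambda>g. bounded_eval g m xs) gs"
  have nz: "0 \<notin> set ?vs" and f: "bounded_eval f m (map (\<lambda>y. y - 1) ?vs) = Suc r"
    using Cn.prems by (auto simp: Let_def split: if_splits)
  have "list_all2 (\<lambda>g y. eval g xs y) gs (map (\<lambda>y. y - 1) ?vs)"
    unfolding list_all2_conv_all_nth
  proof (intro conjI allI impI)
    fix i assume i: "i < length gs"
    then have "bounded_eval (gs ! i) m xs \<noteq> 0" using nz by (metis length_map nth_map nth_mem)
    then obtain y where y: "bounded_eval (gs ! i) m xs = Suc y" using not0_implies_Suc by blast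
    then show "eval (gs ! i) xs (map (\<lambda>y. y - 1) ?vs ! i)"
      using Cn.IH(2)[OF nth_mem[OF i] y] i by simp
  qed simp
  then show ?case using Cn.IH(1)[OF f] by (rule eval_Cn)
next
  case (Pr f g)
  then obtain n ys where "xs = n # ys" by (cases xs) auto
  with Pr show ?case using eval_Pr_bounded_pr[OF Pr.IH] by simp
next
  case (Mn f)
  have "bounded_mn (bounded_eval f m) m xs = Suc (Suc r)" using Mn.prems by simp
  then have found: "bounded_eval f m (r # xs) = 1"
    and before: "\<forall>j<r. \<exists>y. bounded_eval f m (j # xs) = Suc (Suc y)"
    using bounded_mn_invariant[of "bounded_eval f m" m xs] by auto
  show ?case
  proof (rule eval_Mn)
    show "eval f (r # xs) 0" using Mn.IH found by simp
    show "\<forall>i<r. \<exists>y. eval f (i # xs) y \<and> 0 < y" using before Mn.IH by blast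
  qed
qed

lemma bounded_eval_complete: "eval f xs r \<Longrightarrow> eventually (\<lambda>m. bounded_eval f m xs = Suc r) at_top"
proof (induction rule: eval.induct)
  case (eval_Cn xs gs ys f r)
  have "eventually (\<lambda>m. \<forall>i\<in>{..<length gs}. bounded_eval (gs ! i) m xs = Suc (ys ! i)) at_top"
    using eval_Cn.IH(1) by (intro eventually_ball_finite) (auto simp: list_all2_conv_all_nth)
  then have "eventually (\<lambda>m. map (\<lambda>g. bounded_eval g m xs) gs = map Suc ys) at_top"
    by eventually_elim (use eval_Cn.IH(1) in \<open>auto simp: list_all2_conv_all_nth intro!: nth_equalityI\<close>)
  with eval_Cn.IH(2) show ?case
    by eventually_elim (simp add: comp_def)
next
  case (eval_PrS f g n xs r r')
  from eval_PrS.IH show ?case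
    by eventually_elim (simp add: Let_def)
next
  case (eval_Mn f r xs)
  have "\<forall>i\<in>{..<r}. eventually (\<lambda>m. \<exists>y. bounded_eval f m (i # xs) = Suc (Suc y)) at_top"
  proof
    fix i assume "i \<in> {..<r}"
    then obtain y where "y > 0" "eventually (\<lambda>m. bounded_eval f m (i # xs) = Suc y) at_top"
      using eval_Mn.IH(2) by auto
    then show "eventually (\<lambda>m. \<exists>y. bounded_eval f m (i # xs) = Suc (Suc y)) at_top"
      by (auto elim!: eventually_mono simp: gr0_conv_Suc)
  qed
  from eventually_ball_finite[OF finite_lessThan this]
  have "eventually (\<lambda>m. \<forall>i<r. \<exists>y. bounded_eval f m (i # xs) = Suc (Suc y)) at_top"
    by (rule eventually_mono) simp
  with eval_Mn.IH(1) eventually_gt_at_top[of r] show ?case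
    by eventually_elim (simp add: bounded_mn_found)
qed simp_all

lemma eval_iff_bounded_eval: "eval f xs r \<longleftrightarrow> (\<exists>m. bounded_eval f m xs = Suc r)"
proof
  assume "eval f xs r"
  then show "\<exists>m. bounded_eval f m xs = Suc r"
    using bounded_eval_complete eventually_happens' trivial_limit_at_top_linorder by blast
qed (auto intro: bounded_eval_sound)

definition ids_from :: "nat \<Rightarrow> nat \<Rightarrow> recf list" where
  "ids_from p k = map (\<lambda>j. Id (j + p)) [0..<k]"

lemma eval_ids_from:
  "length pre = p \<Longrightarrow> length ys = k \<Longrightarrow> list_all2 (\<lambda>g y. eval g (pre @ ys) y) (ids_from p k) ys"
  by (auto simp: ids_from_def list_all2_conv_all_nth nth_append intro!: eval_IdI)

primrec all_pos_rf :: "recf list \<Rightarrow> recf" where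
  "all_pos_rf [] = const_rf 1"
| "all_pos_rf (g # gs) = ifpos_rf g (all_pos_rf gs) Z"

lemma eval_all_pos_rf:
  "list_all2 (\<lambda>g v. eval g xs v) gs vs \<Longrightarrow> eval (all_pos_rf gs) xs (if 0 \<in> set vs then 0 else 1)"
proof (induction rule: list_all2_induct)
  case Nil then show ?case using eval_const_rf[of 1] by simp
next
  case (Cons g gs v vs)
  have "(if v = 0 then 0 else if 0 \<in> set vs then 0 else 1) = (if 0 \<in> set (v # vs) then 0 else (1::nat))"
    by auto
  with eval_ifpos_rf[OF Cons(1) Cons(3) eval_Z] show ?case by simp
qed

text \<open>The inputs of \<open>bounded_prog f k\<close> are the search bound followed by the \<open>k\<close> arguments of \<open>f\<close>.\<close>
primrec bounded_prog :: "recf \<Rightarrow> nat \<Rightarrow> recf" where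
  "bounded_prog Z k = const_rf 1"
| "bounded_prog S k = (if k = 0 then Z else Cn S [Cn S [Id 1]])"
| "bounded_prog (Id i) k = (if i < k then Cn S [Id (Suc i)] else Z)"
| "bounded_prog (Cn f gs) k = ifpos_rf (all_pos_rf (map (\<lambda>g. bounded_prog g k) gs))
      (Cn (bounded_prog f (length gs)) (Id 0 # map (\<lambda>g. pred_rf (bounded_prog g k)) gs)) Z"
| "bounded_prog (Pr f g) k = (if k = 0 then Z else
      Cn (Pr (bounded_prog f (k - 1))
             (ifpos_rf (Id 1)
               (Cn (bounded_prog g (Suc k)) (Id 2 # Id 0 # pred_rf (Id 1) # ids_from 3 (k - 1))) Z))
         (Id 1 # Id 0 # ids_from 2 (k - 1)))"
| "bounded_prog (Mn f) k = pred_rf (Cn (Pr (const_rf 1)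
      (case01_rf (Id 1) Z
         (case01_rf (Cn (bounded_prog f (Suc k)) (Id 2 # Id 0 # ids_from 3 k))
            Z (Cn S [Cn S [Id 0]]) (const_rf 1))
         (Id 1)))
      (Id 0 # Id 0 # ids_from 1 k))"

lemma eval_bounded_prog_Cn:
  assumes f: "\<And>ys. length ys = length gs \<Longrightarrow>
      eval (bounded_prog f (length gs)) (m # ys) (bounded_eval f m ys)"
    and gs: "\<And>g. g \<in> set gs \<Longrightarrow> eval (bounded_prog g k) (m # xs) (bounded_eval g m xs)"
  shows "eval (bounded_prog (Cn f gs) k) (m # xs) (bounded_eval (Cn f gs) m xs)"
proof -
  let ?vs = "map (\<lambda>g. bounded_eval g m xs) gs"
  have "eval (all_pos_rf (map (\<lambda>g. bounded_prog g k) gs)) (m # xs) (if 0 \<in> set ?vs then 0 else 1)"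
    by (rule eval_all_pos_rf) (use gs in \<open>simp add: list.rel_map list_all2_same\<close>)
  moreover have "eval (Cn (bounded_prog f (length gs)) (Id 0 # map (\<lambda>g. pred_rf (bounded_prog g k)) gs))
      (m # xs) (bounded_eval f m (map (\<lambda>y. y - 1) ?vs))"
  proof (rule eval_Cn)
    show "list_all2 (\<lambda>g y. eval g (m # xs) y) (Id 0 # map (\<lambda>g. pred_rf (bounded_prog g k)) gs)
        (m # map (\<lambda>y. y - 1) ?vs)"
      using gs by (auto intro!: eval_IdI eval_pred_rf[simplified] simp: list.rel_map list_all2_same)
  qed (rule f, simp)
  ultimately have "eval (bounded_prog (Cn f gs) k) (m # xs)
      (if (if 0 \<in> set ?vs then 0 else 1) = (0::nat) then 0 else bounded_eval f m (map (\<lambda>y. y - 1) ?vs))"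
    unfolding bounded_prog.simps by (rule eval_ifpos_rf[OF _ _ eval_Z])
  also have "\<dots> = bounded_eval (Cn f gs) m xs"
    by (simp only: bounded_eval.simps Let_def) simp
  finally show ?thesis .
qed

lemma eval_bounded_prog_Pr:
  assumes f: "\<And>ys. length ys = k - 1 \<Longrightarrow> eval (bounded_prog f (k - 1)) (m # ys) (bounded_eval f m ys)"
    and g: "\<And>ys. length ys = Suc k \<Longrightarrow> eval (bounded_prog g (Suc k)) (m # ys) (bounded_eval g m ys)"
    and xs: "length xs = k"
  shows "eval (bounded_prog (Pr f g) k) (m # xs) (bounded_eval (Pr f g) m xs)"
proof (cases xs)
  case Nil
  then show ?thesis using xs by (auto intro: eval_Z)
next
  case (Cons n ys)
  with xs have ys: "length ys = k - 1" and k: "k \<noteq> 0" by auto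
  let ?step = "ifpos_rf (Id 1) (Cn (bounded_prog g (Suc k)) (Id 2 # Id 0 # pred_rf (Id 1) # ids_from 3 (k - 1))) Z"
  have step: "eval ?step (i # r # m # ys) (if r = 0 then 0 else bounded_eval g m (i # (r - 1) # ys))" for i r
  proof -
    have "list_all2 (\<lambda>h y. eval h (i # r # m # ys) y)
        (Id 2 # Id 0 # pred_rf (Id 1) # ids_from 3 (k - 1)) (m # i # (r - 1) # ys)"
      using eval_ids_from[of "[i, r, m]" 3 ys "k - 1"] ys by (auto intro!: eval_IdI eval_pred_rf[simplified])
    then have "eval (Cn (bounded_prog g (Suc k)) (Id 2 # Id 0 # pred_rf (Id 1) # ids_from 3 (k - 1)))
        (i # r # m # ys) (bounded_eval g m (i # (r - 1) # ys))"
      by (rule eval_Cn) (rule g, use ys k in simp)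
    then show ?thesis by (rule eval_ifpos_rf[OF _ _ eval_Z, rotated]) (auto intro: eval_IdI)
  qed
  have "eval (Pr (bounded_prog f (k - 1)) ?step) (n # m # ys)
      (bounded_pr (bounded_eval f m) (bounded_eval g m) n ys)"
    by (rule eval_Pr_iterate) (use f[OF ys] step in \<open>simp_all add: Let_def\<close>)
  moreover have "list_all2 (\<lambda>h y. eval h (m # n # ys) y) (Id 1 # Id 0 # ids_from 2 (k - 1)) (n # m # ys)"
    using eval_ids_from[of "[m, n]" 2 ys "k - 1"] ys by (auto intro!: eval_IdI)
  ultimately show ?thesis using Cons k by (auto intro: eval_Cn)
qed

lemma eval_bounded_prog_Mn:
  assumes f: "\<And>ys. length ys = Suc k \<Longrightarrow> eval (bounded_prog f (Suc k)) (m # ys) (bounded_eval f m ys)"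
    and xs: "length xs = k"
  shows "eval (bounded_prog (Mn f) k) (m # xs) (bounded_eval (Mn f) m xs)"
proof -
  let ?val = "Cn (bounded_prog f (Suc k)) (Id 2 # Id 0 # ids_from 3 k)"
  let ?step = "case01_rf (Id 1) Z (case01_rf ?val Z (Cn S [Cn S [Id 0]]) (const_rf 1)) (Id 1)"
  have val: "eval ?val (i # t # m # xs) (bounded_eval f m (i # xs))" for i t
  proof (rule eval_Cn)
    show "list_all2 (\<lambda>g y. eval g (i # t # m # xs) y) (Id 2 # Id 0 # ids_from 3 k) (m # i # xs)"
      using eval_ids_from[of "[i, t, m]" 3 xs k] xs by (auto intro!: eval_IdI)
  qed (rule f, simp add: xs)
  have step: "eval ?step (i # t # m # xs) (if t = 1 then
      (let v = bounded_eval f m (i # xs) in if v = 0 then 0 else if v = 1 then Suc (Suc i) else 1) else t)"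
    for i t
  proof -
    have "eval ?step (i # t # m # xs) (if t = 0 then 0 else if t = 1 then
        (let v = bounded_eval f m (i # xs) in if v = 0 then 0 else if v = 1 then Suc (Suc i) else 1) else t)"
      unfolding Let_def
      by (intro eval_case01_rf val eval_Z eval_const_rf eval_Cn_S eval_IdI) auto
    then show ?thesis by (cases "t = 0") auto
  qed
  have search: "eval (Pr (const_rf 1) ?step) (i # m # xs) (bounded_mn (bounded_eval f m) i xs)" for i
  proof (rule eval_Pr_iterate)
    fix i
    show "eval ?step (i # bounded_mn (bounded_eval f m) i xs # m # xs) (bounded_mn (bounded_eval f m) (Suc i) xs)"
      using step[of i "bounded_mn (bounded_eval f m) i xs"] by (simp add: Let_def)
  qed (auto intro: eval_Cn_S eval_Z)
  have "list_all2 (\<lambda>g y. eval g (m # xs) y) (Id 0 # Id 0 # ids_from 1 k) (m # m # xs)"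
    using eval_ids_from[of "[m]" 1 xs k] xs by (auto intro!: eval_IdI)
  from eval_pred_rf[OF eval_Cn[OF this search]] show ?thesis by simp
qed

lemma eval_bounded_prog: "length xs = k \<Longrightarrow> eval (bounded_prog f k) (m # xs) (bounded_eval f m xs)"
proof (induction f arbitrary: k xs)
  case Z then show ?case by (auto intro: eval_const_rf[of 1, simplified])
next
  case S then show ?case by (cases xs) (auto intro!: eval_Cn_S eval_Z eval_IdI)
next
  case (Id i) then show ?case by (auto intro!: eval_Cn_S eval_Z eval_IdI)
next
  case (Cn f gs) show ?case by (rule eval_bounded_prog_Cn) (use Cn in blast)+
next
  case (Pr f g) show ?case by (rule eval_bounded_prog_Pr) (use Pr in blast)+
next
  case (Mn f) show ?case by (rule eval_bounded_prog_Mn) (use Mn in blast)+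
qed

section \<open>A strong bimonoid with capped multiplication\<close>

fun cap :: "nat option \<Rightarrow> nat \<Rightarrow> nat" where
  "cap None n = n"
| "cap (Some T) n = min n (Suc T)"

lemma cap_0 [simp]: "cap t 0 = 0"
  by (cases t) auto

lemma cap_Suc_0 [simp]: "cap t (Suc 0) = Suc 0"
  by (cases t) auto

lemma cap_gt_0_iff [simp]: "0 < cap t n \<longleftrightarrow> 0 < n"
  by (cases t) auto

lemma cap_add_cap: "cap t (cap t a + c) = cap t (a + c)"
  by (cases t) auto

text \<open>A nonzero \<open>x\<close> stands for \<open>x - 1\<close>, and these are multiplied by capped addition;
  \<open>1\<close> stays the unit also beyond the cap.\<close>
definition cap_mult :: "nat option \<Rightarrow> nat \<Rightarrow> nat \<Rightarrow> nat" where
  "cap_mult t x y = (if x = 0 then 0 else if x = 1 then y else if y = 0 then 0 else if y = 1 then x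
     else Suc (cap t (x + y - 2)))"

lemma cap_mult_simps [simp]:
  "cap_mult t 0 x = 0" "cap_mult t x 0 = 0" "cap_mult t (Suc 0) x = x" "cap_mult t x (Suc 0) = x"
  by (auto simp: cap_mult_def)

lemma cap_mult_ge2: "2 \<le> x \<Longrightarrow> 2 \<le> y \<Longrightarrow> cap_mult t x y = Suc (cap t (x + y - 2))"
  by (simp add: cap_mult_def)

lemma cap_mult_assoc: "cap_mult t (cap_mult t x y) z = cap_mult t x (cap_mult t y z)"
proof -
  consider "x = 0" | "x = 1" | "y = 0" | "y = 1" | "z = 0" | "z = 1" | "2 \<le> x" "2 \<le> y" "2 \<le> z"
    by linarith
  then show ?thesis
  proof cases
    case 7
    have xy: "2 \<le> Suc (cap t (x + y - 2))" and yz: "2 \<le> Suc (cap t (y + z - 2))"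
      using 7 by (simp_all add: Suc_le_eq)
    have "cap_mult t (cap_mult t x y) z = Suc (cap t (cap t (x + y - 2) + (z - 1)))"
      using cap_mult_ge2[OF xy 7(3)] 7 by (simp add: cap_mult_ge2)
    also have "\<dots> = Suc (cap t (cap t (y + z - 2) + (x - 1)))"
    proof -
      have "x + y - 2 + (z - 1) = y + z - 2 + (x - 1)" using 7 by linarith
      then show ?thesis by (simp only: cap_add_cap)
    qed
    also have "\<dots> = cap_mult t x (Suc (cap t (y + z - 2)))"
    proof -
      have "x + Suc (cap t (y + z - 2)) - 2 = cap t (y + z - 2) + (x - 1)" using 7 by simp
      then show ?thesis by (simp only: cap_mult_ge2[OF 7(1) yz])
    qed
    also have "\<dots> = cap_mult t x (cap_mult t y z)"
      using 7 by (simp add: cap_mult_ge2)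
    finally show ?thesis .
  qed simp_all
qed

lemma strong_bimonoid_cap_mult: "strong_bimonoid UNIV (+) (cap_mult t) 0 1"
  unfolding strong_bimonoid_def by (simp add: cap_mult_assoc)

lemma cap_mult_Suc_cap_2: "cap_mult t (Suc (cap t n)) 2 = Suc (cap t (Suc n))"
proof (cases "n = 0")
  case False
  then have "2 \<le> Suc (cap t n)" by (simp add: Suc_le_eq)
  then have "cap_mult t (Suc (cap t n)) 2 = Suc (cap t (cap t n + 1))"
    by (simp add: cap_mult_ge2)
  then show ?thesis using cap_add_cap[of t n 1] by simp
qed simp

section \<open>Computing the cap from the time a program answers zero\<close>

definition answers_zero :: "recf \<Rightarrow> nat \<Rightarrow> nat \<Rightarrow> bool" where
  "answers_zero d e m \<longleftrightarrow> bounded_eval d m [e] = 1"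

definition zero_time :: "recf \<Rightarrow> nat \<Rightarrow> nat option" where
  "zero_time d e = (if \<exists>m. answers_zero d e m then Some (LEAST m. answers_zero d e m) else None)"

lemma eval_0_iff_zero_time: "eval d [e] 0 \<longleftrightarrow> zero_time d e \<noteq> None"
  by (simp add: zero_time_def answers_zero_def eval_iff_bounded_eval)

definition first_answer :: "recf \<Rightarrow> nat \<Rightarrow> nat \<Rightarrow> nat" where
  "first_answer d e n = (if \<exists>m<n. answers_zero d e m then Suc (LEAST m. answers_zero d e m) else 0)"

lemma first_answer_Suc:
  "first_answer d e (Suc n) =
     (if first_answer d e n \<noteq> 0 then first_answer d e n else if answers_zero d e n then Suc n else 0)"
proof (cases "\<exists>m<n. answers_zero d e m")
  case False
  then have "answers_zero d e n \<Longrightarrow> (LEAST m. answers_zero d e m) = n"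
    by (intro Least_equality) (auto simp: not_less[symmetric])
  with False show ?thesis by (auto simp: first_answer_def less_Suc_eq)
qed (auto simp: first_answer_def less_Suc_eq)

definition first_answer_prog :: "recf \<Rightarrow> recf" where
  "first_answer_prog d = Pr Z (ifpos_rf (Id 1) (Id 1)
     (case01_rf (Cn (bounded_prog d 1) [Id 0, Id 2]) Z (Cn S [Id 0]) Z))"

lemma eval_first_answer_prog: "eval (first_answer_prog d) [n, e] (first_answer d e n)"
  unfolding first_answer_prog_def
proof (rule eval_Pr_iterate)
  fix i
  have "eval (Cn (bounded_prog d 1) [Id 0, Id 2]) [i, first_answer d e i, e] (bounded_eval d i [e])"
    by (rule eval_Cn2[OF _ _ eval_bounded_prog]) (auto intro: eval_IdI)
  then have "eval (case01_rf (Cn (bounded_prog d 1) [Id 0, Id 2]) Z (Cn S [Id 0]) Z)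
      [i, first_answer d e i, e] (if bounded_eval d i [e] = 0 then 0 else if bounded_eval d i [e] = 1 then Suc i else 0)"
    by (intro eval_case01_rf eval_Z eval_Cn_S eval_IdI) auto
  also have "(if bounded_eval d i [e] = 0 then 0 else if bounded_eval d i [e] = 1 then Suc i else 0) =
      (if answers_zero d e i then Suc i else 0)"
    by (simp add: answers_zero_def)
  finally have "eval (ifpos_rf (Id 1) (Id 1) (case01_rf (Cn (bounded_prog d 1) [Id 0, Id 2]) Z (Cn S [Id 0]) Z))
      [i, first_answer d e i, e]
      (if first_answer d e i = 0 then (if answers_zero d e i then Suc i else 0) else first_answer d e i)"
    by (intro eval_ifpos_rf eval_IdI) auto
  then show "eval (ifpos_rf (Id 1) (Id 1) (case01_rf (Cn (bounded_prog d 1) [Id 0, Id 2]) Z (Cn S [Id 0]) Z))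
      [i, first_answer d e i, e] (first_answer d e (Suc i))"
    unfolding first_answer_Suc by (simp split: if_splits)
qed (simp add: first_answer_def eval_Z)

definition cap_prog :: "recf \<Rightarrow> recf" where
  "cap_prog d = ifpos_rf (Cn (first_answer_prog d) [Id 0, Id 1]) (Cn (first_answer_prog d) [Id 0, Id 1]) (Id 0)"

lemma eval_cap_prog: "eval (cap_prog d) [n, e] (cap (zero_time d e) n)"
proof -
  have first: "eval (Cn (first_answer_prog d) [Id 0, Id 1]) [n, e] (first_answer d e n)"
    by (rule eval_Cn2[OF _ _ eval_first_answer_prog]) (auto intro: eval_IdI)
  have "eval (cap_prog d) [n, e] (if first_answer d e n = 0 then n else first_answer d e n)"
    unfolding cap_prog_def by (rule eval_ifpos_rf[OF first first]) (auto intro: eval_IdI)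
  also have "(if first_answer d e n = 0 then n else first_answer d e n) = cap (zero_time d e) n"
  proof (cases "\<exists>m. answers_zero d e m")
    case True
    let ?T = "LEAST m. answers_zero d e m"
    have "answers_zero d e ?T" using True by (rule LeastI_ex)
    moreover have "?T \<le> m" if "answers_zero d e m" for m
      using that by (rule Least_le)
    ultimately have "(\<exists>m<n. answers_zero d e m) \<longleftrightarrow> ?T < n"
      using le_less_trans by blast
    with True show ?thesis by (simp add: first_answer_def zero_time_def)
  qed (simp add: first_answer_def zero_time_def)
  finally show ?thesis .
qed

definition cap_mult_prog :: "recf \<Rightarrow> recf" where
  "cap_mult_prog d = case01_rf (Id 0) Z (Id 1) (case01_rf (Id 1) Z (Id 0)
     (Cn S [Cn (cap_prog d) [pred_rf (pred_rf (add_rf (Id 0) (Id 1))), Id 2]]))"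

lemma eval_cap_mult_prog: "eval (cap_mult_prog d) [x, y, e] (cap_mult (zero_time d e) x y)"
proof -
  have "eval (Cn S [Cn (cap_prog d) [pred_rf (pred_rf (add_rf (Id 0) (Id 1))), Id 2]]) [x, y, e]
      (Suc (cap (zero_time d e) (x + y - 1 - 1)))"
    by (intro eval_Cn_S eval_Cn2[OF _ _ eval_cap_prog] eval_pred_rf eval_add_rf eval_IdI) auto
  then have "eval (cap_mult_prog d) [x, y, e] (if x = 0 then 0 else if x = 1 then y else
      if y = 0 then 0 else if y = 1 then x else Suc (cap (zero_time d e) (x + y - 1 - 1)))"
    unfolding cap_mult_prog_def by (intro eval_case01_rf eval_Z eval_IdI) auto
  also have "(if x = 0 then 0 else if x = 1 then y else
      if y = 0 then 0 else if y = 1 then x else Suc (cap (zero_time d e) (x + y - 1 - 1))) =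
      cap_mult (zero_time d e) x y"
    by (simp add: cap_mult_def numeral_2_eq_2)
  finally show ?thesis .
qed

section \<open>Crisp-deterministic automata over a monadic alphabet\<close>

definition monadic_sig :: "(nat \<times> nat) list" where
  "monadic_sig = [(0, 0), (1, 1)]"

primrec gamma_tree :: "nat \<Rightarrow> tree" where
  "gamma_tree 0 = Node (0, 0) []"
| "gamma_tree (Suc n) = Node (1, 1) [gamma_tree n]"

lemma wf_tree_monadic_sig_iff: "wf_tree (set monadic_sig) \<xi> \<longleftrightarrow> (\<exists>n. \<xi> = gamma_tree n)"
proof
  show "wf_tree (set monadic_sig) \<xi> \<Longrightarrow> \<exists>n. \<xi> = gamma_tree n"
  proof (induction \<xi>)
    case (Node s ts)
    then have len: "length ts = snd s" and sub: "\<forall>t\<in>set ts. wf_tree (set monadic_sig) t" by simp_all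
    from Node.prems consider "s = (0, 0)" | "s = (1, 1)" by (auto simp: monadic_sig_def)
    then show ?case
    proof cases
      case 1
      with len show ?thesis by (intro exI[of _ 0]) simp
    next
      case 2
      with len obtain t where ts: "ts = [t]" by (auto simp: length_Suc_conv)
      with Node.IH sub obtain n where "t = gamma_tree n" by auto
      with 2 ts show ?thesis by (intro exI[of _ "Suc n"]) simp
    qed
  qed
  show "\<exists>n. \<xi> = gamma_tree n \<Longrightarrow> wf_tree (set monadic_sig) \<xi>"
  proof (elim exE)
    show "\<xi> = gamma_tree n \<Longrightarrow> wf_tree (set monadic_sig) \<xi>" for n
      by (induction n arbitrary: \<xi>) (auto simp: monadic_sig_def)
  qed
qed

lemma bsum_plus_nat: "bsum (+) 0 xs = sum_list (xs :: nat list)"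
  unfolding bsum_def by (induction xs) auto

lemma hV_gamma_tree_Suc: "hV (+) tm 0 u N \<delta> (gamma_tree (Suc n)) q =
   (\<Sum>q'\<leftarrow>[0..<N]. tm (tm u (hV (+) tm 0 u N \<delta> (gamma_tree n) q')) (\<delta> [q'] (1, 1) q))"
  by (simp add: bsum_plus_nat bprod_def comp_def)

definition is_unit_vector :: "nat \<Rightarrow> nat \<Rightarrow> (nat \<Rightarrow> nat) \<Rightarrow> bool" where
  "is_unit_vector N r v \<longleftrightarrow> r < N \<and> (\<forall>q<N. v q = (if q = r then 1 else 0))"

lemma sum_list_unit_vector:
  assumes "r < N" and "\<And>q. q < N \<Longrightarrow> f q = (if q = r then c else 0)"
  shows "(\<Sum>q\<leftarrow>[0..<N]. f q) = (c :: nat)"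
proof -
  have "(\<Sum>q\<leftarrow>[0..<N]. f q) = (\<Sum>q<N. if q = r then c else 0)"
    by (simp add: sum_list_distinct_conv_sum_set atLeast0LessThan assms(2))
  then show ?thesis using assms(1) by simp
qed

lemma crisp_deterministic_unit_vector:
  assumes "crisp_deterministic Sig 0 1 N \<delta>" and "s \<in> Sig" "length qs = snd s" "set qs \<subseteq> {..<N}"
  obtains r where "is_unit_vector N r (\<delta> qs s)"
proof -
  from assms obtain r where r: "r < N" "\<delta> qs s r = 1" and unique: "\<And>q. q < N \<Longrightarrow> \<delta> qs s q = 1 \<Longrightarrow> q = r"
    and crisp: "\<forall>q<N. \<delta> qs s q = 1 \<or> \<delta> qs s q = 0"
    unfolding crisp_deterministic_def by metis
  have "is_unit_vector N r (\<delta> qs s)"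
    unfolding is_unit_vector_def using r unique crisp by (metis zero_neq_one)
  then show thesis by (rule that)
qed

locale nat_plus_bimonoid =
  fixes tm :: "nat \<Rightarrow> nat \<Rightarrow> nat"
  assumes strong_bimonoid: "strong_bimonoid UNIV (+) tm 0 1"
begin

lemma tm_simps [simp]: "tm 0 x = 0" "tm x 0 = 0" "tm (Suc 0) x = x" "tm x (Suc 0) = x"
  using strong_bimonoid by (simp_all add: strong_bimonoid_def)

lemma hV_gamma_tree_Suc_unit_vector:
  assumes "is_unit_vector N r (hV (+) tm 0 1 N \<delta> (gamma_tree n))"
  shows "hV (+) tm 0 1 N \<delta> (gamma_tree (Suc n)) q = \<delta> [r] (1, 1) q"
  unfolding hV_gamma_tree_Suc using assms
  by (intro sum_list_unit_vector) (auto simp: is_unit_vector_def)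

lemma wta_sem_unit_vector:
  assumes "is_unit_vector N r (hV (+) tm 0 1 N \<delta> \<xi>)"
  shows "wta_sem (+) tm 0 1 N \<delta> F \<xi> = F r"
  unfolding wta_sem_def bsum_plus_nat using assms
  by (intro sum_list_unit_vector) (auto simp: is_unit_vector_def)

lemma crisp_hV_gamma_tree:
  assumes crisp: "crisp_deterministic Sig 0 1 N \<delta>" and sig: "set monadic_sig \<subseteq> Sig"
  shows "\<exists>r. is_unit_vector N r (hV (+) tm 0 1 N \<delta> (gamma_tree n))"
proof (induction n)
  case 0
  obtain r where "is_unit_vector N r (\<delta> [] (0, 0))"
    using crisp_deterministic_unit_vector[OF crisp, of "(0, 0)" "[]"] sig by (auto simp: monadic_sig_def)
  then have "is_unit_vector N r (hV (+) tm 0 1 N \<delta> (gamma_tree 0))"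
    by (simp add: is_unit_vector_def bsum_plus_nat bprod_def)
  then show ?case ..
next
  case (Suc n)
  then obtain r0 where r0: "is_unit_vector N r0 (hV (+) tm 0 1 N \<delta> (gamma_tree n))" ..
  then have "r0 < N" by (simp add: is_unit_vector_def)
  then obtain r where "is_unit_vector N r (\<delta> [r0] (1, 1))"
    using crisp_deterministic_unit_vector[OF crisp, of "(1, 1)" "[r0]"] sig by (auto simp: monadic_sig_def)
  then have "is_unit_vector N r (hV (+) tm 0 1 N \<delta> (gamma_tree (Suc n)))"
    using hV_gamma_tree_Suc_unit_vector[OF r0] by (simp add: is_unit_vector_def)
  then show ?case ..
qed

lemma crisp_wta_sem_gamma_tree:
  assumes "crisp_deterministic Sig 0 1 N \<delta>" and "set monadic_sig \<subseteq> Sig"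
  shows "wta_sem (+) tm 0 1 N \<delta> F (gamma_tree n) \<in> F ` {..<N}"
proof -
  obtain r where "is_unit_vector N r (hV (+) tm 0 1 N \<delta> (gamma_tree n))"
    using crisp_hV_gamma_tree[OF assms] ..
  then have "wta_sem (+) tm 0 1 N \<delta> F (gamma_tree n) = F r" and "r < N"
    by (rule wta_sem_unit_vector, simp add: is_unit_vector_def)
  then show ?thesis by simp
qed

end

definition counter_delta :: "nat \<Rightarrow> nat list \<Rightarrow> nat \<times> nat \<Rightarrow> nat \<Rightarrow> nat" where
  "counter_delta c qs s q =
     (if s = (0, 0) then (if q = 0 then 1 else 0)
      else if q = min (Suc (hd qs)) c then 1 else 0)"

lemma counter_delta_gamma: "counter_delta c [r] (1, 1) q = (if q = min (Suc r) c then 1 else 0)"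
  by (simp add: counter_delta_def)

lemma crisp_deterministic_counter_delta: "crisp_deterministic (set monadic_sig) 0 1 (Suc c) (counter_delta c)"
  unfolding crisp_deterministic_def counter_delta_def monadic_sig_def by auto

lemma (in nat_plus_bimonoid) wta_sem_counter_delta:
  "wta_sem (+) tm 0 1 (Suc c) (counter_delta c) F (gamma_tree n) = F (min n c)"
proof -
  have "is_unit_vector (Suc c) (min n c) (hV (+) tm 0 1 (Suc c) (counter_delta c) (gamma_tree n))"
  proof (induction n)
    case 0
    then show ?case by (simp add: is_unit_vector_def counter_delta_def bsum_plus_nat bprod_def)
  next
    case (Suc n)
    have "min (Suc (min n c)) c = min (Suc n) c" by simp
    then have "hV (+) tm 0 1 (Suc c) (counter_delta c) (gamma_tree (Suc n)) q =
        (if q = min (Suc n) c then 1 else 0)" for q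
      using hV_gamma_tree_Suc_unit_vector[OF Suc.IH, of q]
      by (simp add: counter_delta_gamma[simplified] del: hV.simps gamma_tree.simps)
    then show ?case by (simp add: is_unit_vector_def del: hV.simps gamma_tree.simps)
  qed
  then show ?thesis by (rule wta_sem_unit_vector)
qed

section \<open>The self-referential instance\<close>

interpretation cap_mult: nat_plus_bimonoid "cap_mult t"
  by unfold_locales (rule strong_bimonoid_cap_mult)

definition monadic_delta :: "((nat list \<times> (nat \<times> nat) \<times> nat) \<times> nat) list" where
  "monadic_delta = [(([], (0, 0), 0), 1), (([0], (1, 1), 0), 2)]"

definition monadic_inst :: "recf \<Rightarrow> inst" where
  "monadic_inst f = \<lparr>sig = monadic_sig, memB = const_rf 1, plusB = add_prog, timesB = f,
     zeroB = 0, oneB = 1, nQ = 1, delta = monadic_delta, fin = [1]\<rparr>"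

definition monadic_inst_code :: "nat \<Rightarrow> nat" where
  "monadic_inst_code c = list_encode
     [list_encode (map prod_encode monadic_sig), recf_enc (const_rf 1), recf_enc add_prog, c, 0, 1, 1,
      list_encode (map (\<lambda>((qs, (a, k), q), w). list_encode [list_encode qs, a, k, q, w]) monadic_delta),
      list_encode [1]]"

lemma inst_enc_monadic_inst: "inst_enc (monadic_inst f) = monadic_inst_code (recf_enc f)"
  by (simp only: inst_enc_def monadic_inst_def monadic_inst_code_def inst.simps)

definition monadic_inst_code_rf :: "recf \<Rightarrow> recf" where
  "monadic_inst_code_rf g = list_rf
     [const_rf (list_encode (map prod_encode monadic_sig)), const_rf (recf_enc (const_rf 1)),
      const_rf (recf_enc add_prog), g, const_rf 0, const_rf 1, const_rf 1,
      const_rf (list_encode (map (\<lambda>((qs, (a, k), q), w). list_encode [list_encode qs, a, k, q, w]) monadic_delta)),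
      const_rf (list_encode [1])]"

lemma eval_monadic_inst_code_rf: "eval g xs c \<Longrightarrow> eval (monadic_inst_code_rf g) xs (monadic_inst_code c)"
  unfolding monadic_inst_code_rf_def monadic_inst_code_def
  by (intro eval_list_rf) (simp add: eval_const_rf del: const_rf.simps list_encode.simps)

text \<open>The code of \<open>Cn f [const_rf c, Id 0, Id 1]\<close> for any \<open>f\<close> with code \<open>c\<close>.\<close>
definition applied_code :: "nat \<Rightarrow> nat" where
  "applied_code c = prod_encode (3, prod_encode (c, list_encode (map recf_enc [const_rf c, Id 0, Id 1])))"

definition applied_code_rf :: recf where
  "applied_code_rf = pair_rf (const_rf 3)
     (pair_rf (Id 0) (list_rf [Cn const_code_prog [Id 0], const_rf (recf_enc (Id 0)), const_rf (recf_enc (Id 1))]))"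

lemma eval_applied_code_rf: "eval applied_code_rf (c # xs) (applied_code c)"
proof -
  have "eval (Cn const_code_prog [Id 0]) (c # xs) (recf_enc (const_rf c))"
    by (rule eval_Cn1[OF _ eval_const_code_prog]) (auto intro: eval_IdI)
  then show ?thesis
    unfolding applied_code_rf_def applied_code_def
    by (intro eval_pair_rf eval_const_rf eval_list_rf) (auto intro: eval_IdI eval_const_rf)
qed

text \<open>Kleene's recursion theorem in miniature: \<open>mult_body d\<close> gets its own code as first input
  and rebuilds from it the code of the instance in which it is used.\<close>
definition mult_body :: "recf \<Rightarrow> recf" where
  "mult_body d = Cn (cap_mult_prog d) [Id 1, Id 2, monadic_inst_code_rf applied_code_rf]"

definition mult_prog :: "recf \<Rightarrow> recf" where
  "mult_prog d = Cn (mult_body d) [const_rf (recf_enc (mult_body d)), Id 0, Id 1]"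

definition diag_inst :: "recf \<Rightarrow> inst" where
  "diag_inst d = monadic_inst (mult_prog d)"

lemma inst_enc_diag_inst: "inst_enc (diag_inst d) = monadic_inst_code (applied_code (recf_enc (mult_body d)))"
  by (simp only: diag_inst_def inst_enc_monadic_inst mult_prog_def applied_code_def recf_enc.simps list.map)

lemma eval_mult_prog:
  "eval (mult_prog d) [x, y] (cap_mult (zero_time d (inst_enc (diag_inst d))) x y)"
proof -
  have "eval (mult_body d) [c, x, y] (cap_mult (zero_time d (monadic_inst_code (applied_code c))) x y)" for c
    unfolding mult_body_def
    by (rule eval_Cn3[OF _ _ eval_monadic_inst_code_rf[OF eval_applied_code_rf] eval_cap_mult_prog])
      (auto intro: eval_IdI)
  then show ?thesis
    unfolding inst_enc_diag_inst mult_prog_def by (rule eval_Cn3[OF eval_const_rf, rotated 2]) (auto intro: eval_IdI)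
qed

abbreviation diag_zero_time :: "recf \<Rightarrow> nat option" where
  "diag_zero_time d \<equiv> zero_time d (inst_enc (diag_inst d))"

lemma diag_inst_fields [simp]:
  "sig (diag_inst d) = monadic_sig" "memB (diag_inst d) = const_rf 1" "plusB (diag_inst d) = add_prog"
  "timesB (diag_inst d) = mult_prog d" "zeroB (diag_inst d) = 0" "oneB (diag_inst d) = 1"
  "nQ (diag_inst d) = 1" "delta (diag_inst d) = monadic_delta" "fin (diag_inst d) = [1]"
  by (simp_all add: diag_inst_def monadic_inst_def)

lemma diag_inst_simps:
  "Sig_of (diag_inst d) = set monadic_sig" "B_of (diag_inst d) = UNIV"
  "plus_of (diag_inst d) = (+)" "times_of (diag_inst d) = cap_mult (diag_zero_time d)"
  using eval_const_rf[of 1]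
  by (auto simp: Sig_of_def B_of_def plus_of_def times_of_def fun_eq_iff
      run_eqI[OF eval_add_prog] run_eqI[OF eval_mult_prog] simp del: const_rf.simps)

lemma sem_of_diag_inst: "sem_of (diag_inst d) (gamma_tree n) = Suc (cap (diag_zero_time d) n)"
proof -
  have delta: "delta_of (diag_inst d) [] (0, 0) 0 = 1" "delta_of (diag_inst d) [0] (1, 1) 0 = 2"
    and fin: "fin_of (diag_inst d) 0 = 1"
    by (simp_all add: delta_of_def fin_of_def diag_inst_def monadic_inst_def monadic_delta_def)
  have "hV (+) (cap_mult (diag_zero_time d)) 0 1 1 (delta_of (diag_inst d)) (gamma_tree n) 0 = Suc (cap (diag_zero_time d) n)"
  proof (induction n)
    case 0
    then show ?case using delta by (simp add: bsum_plus_nat bprod_def)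
  next
    case (Suc n)
    then show ?case using delta by (simp add: bsum_plus_nat bprod_def cap_mult_Suc_cap_2)
  qed
  then show ?thesis using fin by (simp add: sem_of_def diag_inst_simps wta_sem_def bsum_plus_nat)
qed

lemma valid_diag_inst: "valid_inst (diag_inst d)"
proof -
  have total: "\<forall>a b. (\<exists>r. eval add_prog [a, b] r) \<and> (\<exists>r. eval (mult_prog d) [a, b] r)"
    using eval_add_prog eval_mult_prog by blast
  have "bu_deterministic (set monadic_sig) 0 1 (delta_of (diag_inst d))"
    unfolding bu_deterministic_def by auto
  then show ?thesis
    unfolding valid_inst_def diag_inst_simps diag_inst_fields
    using total strong_bimonoid_cap_mult eval_const_rf[of 1] by (auto simp: monadic_sig_def)
qed

lemma has_crisp_equiv_diag_inst_imp_zero_time: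
  assumes "has_crisp_equiv (diag_inst d)"
  shows "diag_zero_time d \<noteq> None"
proof
  assume none: "diag_zero_time d = None"
  from assms obtain N \<delta> F where crisp: "crisp_deterministic (set monadic_sig) 0 1 N \<delta>"
    and equiv: "\<And>\<xi>. wf_tree (set monadic_sig) \<xi> \<Longrightarrow>
      wta_sem (+) (cap_mult None) 0 1 N \<delta> F \<xi> = sem_of (diag_inst d) \<xi>"
    unfolding has_crisp_equiv_def diag_inst_simps diag_inst_fields none by blast
  have "Suc n \<in> F ` {..<N}" for n
  proof -
    have "wf_tree (set monadic_sig) (gamma_tree n)" by (auto simp: wf_tree_monadic_sig_iff)
    then show ?thesis
      using cap_mult.crisp_wta_sem_gamma_tree[OF crisp order_refl, of None F n]
        equiv[of "gamma_tree n"] sem_of_diag_inst[of d n] none by simp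
  qed
  then have "range Suc \<subseteq> F ` {..<N}" by blast
  then have "finite (range Suc)" by (rule finite_subset) simp
  then have "finite (UNIV :: nat set)" by (rule finite_imageD) simp
  then show False by simp
qed

lemma zero_time_imp_has_crisp_equiv_diag_inst:
  assumes "diag_zero_time d = Some T"
  shows "has_crisp_equiv (diag_inst d)"
  unfolding has_crisp_equiv_def diag_inst_simps diag_inst_fields
proof (intro exI conjI allI impI)
  show "crisp_deterministic (set monadic_sig) 0 1 (Suc (Suc T)) (counter_delta (Suc T))"
    by (rule crisp_deterministic_counter_delta)
  fix \<xi> assume "wf_tree (set monadic_sig) \<xi>"
  then obtain n where "\<xi> = gamma_tree n" by (auto simp: wf_tree_monadic_sig_iff)
  then show "wta_sem (+) (cap_mult (diag_zero_time d)) 0 1 (Suc (Suc T)) (counter_delta (Suc T)) Suc \<xi> =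
      sem_of (diag_inst d) \<xi>"
    using assms cap_mult.wta_sem_counter_delta[of "Some T" "Suc T" Suc n] by (simp add: sem_of_diag_inst)
qed simp_all

lemma has_crisp_equiv_diag_inst_iff: "has_crisp_equiv (diag_inst d) \<longleftrightarrow> diag_zero_time d \<noteq> None"
  using has_crisp_equiv_diag_inst_imp_zero_time zero_time_imp_has_crisp_equiv_diag_inst by blast

theorem theorem8p5:
  shows "\<not> (\<exists>d. \<forall>I. valid_inst I \<longrightarrow>
            eval d [inst_enc I] (if has_crisp_equiv I then 1 else 0))"
proof
  assume "\<exists>d. \<forall>I. valid_inst I \<longrightarrow> eval d [inst_enc I] (if has_crisp_equiv I then 1 else 0)"
  then obtain d where decides:
    "eval d [inst_enc (diag_inst d)] (if has_crisp_equiv (diag_inst d) then 1 else 0)"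
    using valid_diag_inst by blast
  have "has_crisp_equiv (diag_inst d) \<longleftrightarrow> eval d [inst_enc (diag_inst d)] 0"
    by (simp add: has_crisp_equiv_diag_inst_iff eval_0_iff_zero_time)
  with decides show False
    using eval_deterministic by (cases "has_crisp_equiv (diag_inst d)") fastforce+
qed

end
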